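(* Let $n,m,t$ be positive integers. There is a map $\Phi:[n]^n\to[n]^n$ with the following property. Let $\sigma\in\mathcal{S}_n$, let $I\subseteq[n]$ be a set of $t$ positions with $\sigma(i)>m$ for all $i\in I$, and let $\sigma_e$ be given by $\sigma_e(i)=\sigma(i)-1$ for $i\in I$ and $\sigma_e(i)=\sigma(i)$ for $i\notin I$. Then $\hat\sigma=\Phi(\sigma_e)$ satisfies: there exist $\ell\le t$ and distinct positions $i_1,\ldots,i_\ell\in[n]$ with $\sigma(i_j)>m$ for all $j\in[\ell]$ and $\sigma(i_j)\le\sigma(i_{j+1})-2$ for all $j\in[\ell-1]$, such that $\hat\sigma(i)=\sigma(i)-1$ for $i\in\{i_1,\ldots,i_\ell\}$ and $\hat\sigma(i)=\sigma(i)$ for all other $i\in[n]$.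
   Context: $[n]=\{1,\ldots,n\}$ and $\mathcal{S}_n$ is the set of permutations of $[n]$, written as sequences $(\sigma(1),\ldots,\sigma(n))$. *)

theory Defs
  imports "HOL-Combinatorics.Permutations" "HOL-Library.FuncSet"
begin

end

theory Submission
  imports Defs "HOL-Library.Infinite_Set"
begin

(* Lowering the values sigma i, i \<in> I, by one moves each maximal run a, a + 1, ..., b of
   consecutive values of sigma ` I down to a - 1, ..., b - 1.  As a - 1 is not in sigma ` I and
   a - 1 \<ge> m \<ge> 1, afterwards a - 1 is taken twice, a, ..., b - 1 once each, and b not at all.
   The map repair n raises every value lying on a stretch of values taken exactly once directly
   above a value taken twice.  This restores sigma except at the positions carrying the run
   bottoms a, and distinct run bottoms differ by at least 2. *)

lemma card_fiber_inj_on: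
  assumes "inj_on g A"
  shows "card {i \<in> A. g i = w} = of_bool (w \<in> g ` A)"
proof (cases "w \<in> g ` A")
  case True
  then obtain a where "a \<in> A" "w = g a" by blast
  with assms have "{i \<in> A. g i = w} = {a}" by (auto dest: inj_onD)
  with True show ?thesis by simp
next
  case False
  then have "{i \<in> A. g i = w} = {}" by auto
  then show ?thesis using False by (simp only: card.empty of_bool_eq(1))
qed

lemma ex_enumeration_by_increasing_key:
  fixes g :: "'a \<Rightarrow> 'b::wellorder"
  assumes "finite J" and "inj_on g J"
  obtains ix where "bij_betw ix {1..card J} J"
    and "\<And>j. j \<in> {1..<card J} \<Longrightarrow> g (ix j) < g (ix (j + 1))"
proof -
  have "card (g ` J) = card J"
    using assms(2) by (rule card_image)
  then obtain h where h: "bij_betw h {..<card J} (g ` J)" "strict_mono_on {..<card J} h"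
    using ex_bij_betw_strict_mono_card[of "g ` J"] assms(1) by auto
  define ix where "ix = (\<lambda>j. the_inv_into J g (h (j - 1)))"
  have shift: "bij_betw (\<lambda>j. j - 1) {1..card J} {..<card J}"
    by (rule bij_betwI[where g = Suc]) auto
  have g_inv: "bij_betw (the_inv_into J g) (g ` J) J"
    using assms(2) by (intro bij_betw_the_inv_into inj_on_imp_bij_betw)
  have "bij_betw ix {1..card J} J"
    using bij_betw_trans[OF shift bij_betw_trans[OF h(1) g_inv]] by (simp add: ix_def comp_def)
  moreover have "g (ix j) = h (j - 1)" if "j \<in> {1..card J}" for j
    unfolding ix_def using that h(1) f_the_inv_into_f[OF assms(2)] bij_betwE by fastforce
  ultimately show thesis
    using h(2) by (intro that) (auto simp: strict_mono_on_def)
qed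

definition fiber_size :: "nat \<Rightarrow> (nat \<Rightarrow> nat) \<Rightarrow> nat \<Rightarrow> nat" where
  "fiber_size n f w = card {i \<in> {1..n}. f i = w}"

definition on_run_above_collision :: "(nat \<Rightarrow> nat) \<Rightarrow> nat \<Rightarrow> bool" where
  "on_run_above_collision c w \<longleftrightarrow> (\<exists>d<w. 2 \<le> c d \<and> (\<forall>x. d < x \<and> x \<le> w \<longrightarrow> c x = 1))"

(* The cap at n only keeps repair n f inside {1..n}; it never acts on a lowered permutation. *)
definition repair :: "nat \<Rightarrow> (nat \<Rightarrow> nat) \<Rightarrow> nat \<Rightarrow> nat" where
  "repair n f = restrict
     (\<lambda>i. if on_run_above_collision (fiber_size n f) (f i) then min (f i + 1) n else f i) {1..n}"

lemma repair_in_funcset: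
  assumes "f \<in> {1..n} \<rightarrow> {1..n}"
  shows "repair n f \<in> {1..n} \<rightarrow>\<^sub>E {1..n}"
proof (rule PiE_I)
  fix i assume "i \<in> {1..n}"
  with assms have "f i \<in> {1..n}" by blast
  then show "repair n f i \<in> {1..n}"
    using \<open>i \<in> {1..n}\<close> by (simp add: repair_def)
qed (auto simp: repair_def)

lemma on_run_above_collision_iff:
  fixes c :: "nat \<Rightarrow> nat"
  assumes S: "S \<subseteq> {2..n}"
    and c: "\<And>w. c w = of_bool (w \<in> {1..n} - S) + of_bool (w + 1 \<in> S)"
  shows "on_run_above_collision c w \<longleftrightarrow> w \<in> S \<and> w + 1 \<in> S"
proof
  assume "on_run_above_collision c w"
  then obtain d where "d < w" "2 \<le> c d" and simple: "\<And>x. d < x \<Longrightarrow> x \<le> w \<Longrightarrow> c x = 1"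
    unfolding on_run_above_collision_def by blast
  have step: "x + 1 \<in> S" if "x \<in> S" "d < x" "x \<le> w" for x
  proof (rule ccontr)
    assume "x + 1 \<notin> S"
    then have "c x = 0" using c[of x] \<open>x \<in> S\<close> by simp
    then show False using simple[OF that(2,3)] by simp
  qed
  have "d + 1 \<in> S"
  proof (rule ccontr)
    assume "d + 1 \<notin> S"
    then have "c d \<le> 1" using c[of d] by (simp add: of_bool_def)
    then show False using \<open>2 \<le> c d\<close> by simp
  qed
  from \<open>d < w\<close> have "d + 1 \<le> w" by simp
  then have "w \<in> S"
    using \<open>d + 1 \<in> S\<close> by (induction rule: dec_induct) (use step in auto)
  with step[of w] \<open>d < w\<close> show "w \<in> S \<and> w + 1 \<in> S" by simp
next
  assume w: "w \<in> S \<and> w + 1 \<in> S"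
  have "1 \<notin> S" "1 < w" using S w by auto
  then obtain d where d: "d < w" "d \<notin> S" and top: "\<And>x. x < w \<and> x \<notin> S \<Longrightarrow> x \<le> d"
    using Nat.ex_has_greatest_nat[of "\<lambda>x. x < w \<and> x \<notin> S" 1 w] by auto
  have run: "x \<in> S" if "d < x" "x \<le> w" for x
    using that top[of x] w by (cases "x = w") auto
  have "d \<in> {1..n}"
    using S run[of "d + 1"] d by auto
  then have "2 \<le> c d"
    using c[of d] d run[of "d + 1"] by simp
  moreover have "c x = 1" if "d < x" "x \<le> w" for x
    using c[of x] run[OF that] run[of "x + 1"] w that by (cases "x = w") auto
  ultimately show "on_run_above_collision c w"
    unfolding on_run_above_collision_def using d(1) by blast
qed

definition lower_at :: "nat \<Rightarrow> (nat \<Rightarrow> nat) \<Rightarrow> nat set \<Rightarrow> nat \<Rightarrow> nat" where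
  "lower_at n \<sigma> I = restrict (\<lambda>i. if i \<in> I then \<sigma> i - 1 else \<sigma> i) {1..n}"

definition run_starts :: "(nat \<Rightarrow> nat) \<Rightarrow> nat set \<Rightarrow> nat set" where
  "run_starts \<sigma> I = {i \<in> I. \<sigma> i - 1 \<notin> \<sigma> ` I}"

lemma fiber_size_lower_at:
  assumes \<sigma>: "\<sigma> permutes {1..n}" and I: "I \<subseteq> {1..n}"
  shows "fiber_size n (lower_at n \<sigma> I) w =
    of_bool (w \<in> {1..n} - \<sigma> ` I) + of_bool (w + 1 \<in> \<sigma> ` I)"
proof -
  have inj: "inj_on \<sigma> A" for A
    using permutes_inj[OF \<sigma>] by (rule inj_on_subset) simp
  have pos: "\<sigma> i \<noteq> 0" if "i \<in> I" for i
  proof -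
    have "i \<in> {1..n}" using that I by blast
    then have "\<sigma> i \<in> {1..n}" by (simp only: permutes_in_image[OF \<sigma>])
    then show ?thesis by simp
  qed
  have "{i \<in> {1..n}. lower_at n \<sigma> I i = w} = {i \<in> {1..n} - I. \<sigma> i = w} \<union> {i \<in> I. \<sigma> i = w + 1}"
    using I by (auto simp: lower_at_def dest: pos)
  moreover have "\<sigma> ` ({1..n} - I) = {1..n} - \<sigma> ` I"
    using image_set_diff[OF permutes_inj[OF \<sigma>]] permutes_image[OF \<sigma>] by simp
  moreover have "card ({i \<in> {1..n} - I. \<sigma> i = w} \<union> {i \<in> I. \<sigma> i = w + 1}) =
      card {i \<in> {1..n} - I. \<sigma> i = w} + card {i \<in> I. \<sigma> i = w + 1}"
    using I by (intro card_Un_disjoint) (auto intro: finite_subset)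
  ultimately show ?thesis
    unfolding fiber_size_def card_fiber_inj_on[OF inj] by simp
qed

lemma repair_lower_at:
  assumes \<sigma>: "\<sigma> permutes {1..n}" and I: "I \<subseteq> {1..n}" and above_one: "\<forall>i\<in>I. 1 < \<sigma> i"
    and i: "i \<in> {1..n}"
  shows "repair n (lower_at n \<sigma> I) i = (if i \<in> run_starts \<sigma> I then \<sigma> i - 1 else \<sigma> i)"
proof -
  let ?f = "lower_at n \<sigma> I"
  have range: "\<sigma> j \<in> {1..n}" if "j \<in> {1..n}" for j
    using that permutes_in_image[OF \<sigma>] by simp
  have "\<sigma> ` I \<subseteq> {2..n}"
    using I above_one range by fastforce
  note run_iff = on_run_above_collision_iff[OF this fiber_size_lower_at[OF \<sigma> I]]
  have repair_i: "repair n ?f i =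
      (if ?f i \<in> \<sigma> ` I \<and> ?f i + 1 \<in> \<sigma> ` I then min (?f i + 1) n else ?f i)"
    using i by (simp add: repair_def run_iff)
  show ?thesis
  proof (cases "i \<in> I")
    case True
    with above_one have "1 < \<sigma> i" by blast
    then have "?f i + 1 = \<sigma> i" "?f i = \<sigma> i - 1"
      using i True by (simp_all add: lower_at_def)
    moreover have "\<sigma> i \<le> n"
      using range[OF i] by simp
    ultimately show ?thesis
      using repair_i True by (simp add: run_starts_def)
  next
    case False
    then have "?f i = \<sigma> i"
      using i by (simp add: lower_at_def)
    moreover have "\<sigma> i \<notin> \<sigma> ` I"
      using False i I permutes_inj[OF \<sigma>] by (auto dest: injD)
    ultimately show ?thesis
      using repair_i False by (simp add: run_starts_def)
  qed
qed

lemma run_starts_subset: "run_starts \<sigma> I \<subseteq> I"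
  by (auto simp: run_starts_def)

lemma run_starts_spaced:
  assumes "a \<in> run_starts \<sigma> I" and "b \<in> run_starts \<sigma> I" and "\<sigma> a < \<sigma> b"
  shows "\<sigma> a + 2 \<le> \<sigma> b"
proof -
  have "\<sigma> a \<in> \<sigma> ` I" "\<sigma> b - 1 \<notin> \<sigma> ` I"
    using assms(1,2) by (auto simp: run_starts_def)
  then have "\<sigma> a \<noteq> \<sigma> b - 1" by metis
  with \<open>\<sigma> a < \<sigma> b\<close> show ?thesis by simp
qed

lemma ex_spaced_enumeration_run_starts:
  fixes \<sigma> :: "nat \<Rightarrow> nat"
  assumes "finite I" and "inj_on \<sigma> I"
  obtains ix where "bij_betw ix {1..card (run_starts \<sigma> I)} (run_starts \<sigma> I)"
    and "\<And>j. j \<in> {1..<card (run_starts \<sigma> I)} \<Longrightarrow> \<sigma> (ix j) + 2 \<le> \<sigma> (ix (j + 1))"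
proof -
  have "finite (run_starts \<sigma> I)" and "inj_on \<sigma> (run_starts \<sigma> I)"
    using assms run_starts_subset by (auto intro: finite_subset inj_on_subset)
  from ex_enumeration_by_increasing_key[OF this]
  obtain ix where ix: "bij_betw ix {1..card (run_starts \<sigma> I)} (run_starts \<sigma> I)"
    and increasing: "\<And>j. j \<in> {1..<card (run_starts \<sigma> I)} \<Longrightarrow> \<sigma> (ix j) < \<sigma> (ix (j + 1))"
    by blast
  show thesis
  proof (rule that[OF ix])
    fix j
    assume j: "j \<in> {1..<card (run_starts \<sigma> I)}"
    then have "ix j \<in> run_starts \<sigma> I" and "ix (j + 1) \<in> run_starts \<sigma> I"
      using bij_betwE[OF ix] by auto
    then show "\<sigma> (ix j) + 2 \<le> \<sigma> (ix (j + 1))"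
      using increasing[OF j] by (rule run_starts_spaced)
  qed
qed

theorem lemma2:
  fixes n m t :: nat
  assumes "n > 0" and "m > 0" and "t > 0"
  shows "\<exists>\<Phi> :: (nat \<Rightarrow> nat) \<Rightarrow> (nat \<Rightarrow> nat).
    (\<forall>f \<in> {1..n} \<rightarrow>\<^sub>E {1..n}. \<Phi> f \<in> {1..n} \<rightarrow>\<^sub>E {1..n}) \<and>
    (\<forall>\<sigma> I. \<sigma> permutes {1..n} \<longrightarrow> I \<subseteq> {1..n} \<longrightarrow> card I = t \<longrightarrow>
       (\<forall>i\<in>I. \<sigma> i > m) \<longrightarrow>
       (let \<sigma>e = restrict (\<lambda>i. if i \<in> I then \<sigma> i - 1 else \<sigma> i) {1..n} in
        \<exists>l ix. l \<le> t \<and> inj_on ix {1..l} \<and> ix ` {1..l} \<subseteq> {1..n} \<and>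
          (\<forall>j\<in>{1..l}. \<sigma> (ix j) > m) \<and>
          (\<forall>j\<in>{1..<l}. \<sigma> (ix j) + 2 \<le> \<sigma> (ix (j + 1))) \<and>
          (\<forall>i\<in>{1..n}. \<Phi> \<sigma>e i = (if i \<in> ix ` {1..l} then \<sigma> i - 1 else \<sigma> i))))"
proof (intro exI[of _ "repair n"] conjI ballI allI impI)
  fix f :: "nat \<Rightarrow> nat"
  assume "f \<in> {1..n} \<rightarrow>\<^sub>E {1..n}"
  then show "repair n f \<in> {1..n} \<rightarrow>\<^sub>E {1..n}"
    by (intro repair_in_funcset) (simp add: PiE_iff)
next
  fix \<sigma> :: "nat \<Rightarrow> nat" and I :: "nat set"
  assume \<sigma>: "\<sigma> permutes {1..n}" and I: "I \<subseteq> {1..n}" "card I = t" and above_m: "\<forall>i\<in>I. \<sigma> i > m"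
  let ?J = "run_starts \<sigma> I"
  have "finite I"
    using I(1) finite_subset by blast
  moreover have "inj_on \<sigma> I"
    using permutes_inj[OF \<sigma>] by (rule inj_on_subset) simp
  ultimately obtain ix where ix: "bij_betw ix {1..card ?J} ?J"
    and spaced: "\<And>j. j \<in> {1..<card ?J} \<Longrightarrow> \<sigma> (ix j) + 2 \<le> \<sigma> (ix (j + 1))"
    using ex_spaced_enumeration_run_starts by blast
  have img: "ix ` {1..card ?J} = ?J"
    using ix by (rule bij_betw_imp_surj_on)
  have "card ?J \<le> t"
    using card_mono[OF \<open>finite I\<close> run_starts_subset] I(2) by simp
  have above_one: "\<forall>i\<in>I. 1 < \<sigma> i"
    using above_m \<open>m > 0\<close> by auto
  show "let \<sigma>e = restrict (\<lambda>i. if i \<in> I then \<sigma> i - 1 else \<sigma> i) {1..n} in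
      \<exists>l ix. l \<le> t \<and> inj_on ix {1..l} \<and> ix ` {1..l} \<subseteq> {1..n} \<and>
        (\<forall>j\<in>{1..l}. \<sigma> (ix j) > m) \<and>
        (\<forall>j\<in>{1..<l}. \<sigma> (ix j) + 2 \<le> \<sigma> (ix (j + 1))) \<and>
        (\<forall>i\<in>{1..n}. repair n \<sigma>e i = (if i \<in> ix ` {1..l} then \<sigma> i - 1 else \<sigma> i))"
    unfolding Let_def lower_at_def[symmetric]
  proof (intro exI[of _ "card ?J"] exI[of _ ix] conjI ballI)
    show "inj_on ix {1..card ?J}"
      using ix by (rule bij_betw_imp_inj_on)
    show "ix ` {1..card ?J} \<subseteq> {1..n}"
      using img run_starts_subset I(1) by blast
    show "m < \<sigma> (ix j)" if "j \<in> {1..card ?J}" for j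
      using img that run_starts_subset above_m by blast
    show "repair n (lower_at n \<sigma> I) i = (if i \<in> ix ` {1..card ?J} then \<sigma> i - 1 else \<sigma> i)"
      if "i \<in> {1..n}" for i
      using repair_lower_at[OF \<sigma> I(1) above_one that] img by simp
  qed (use \<open>card ?J \<le> t\<close> spaced in auto)
qed

end
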